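(* Let $d,k$ be positive integers, $N=d^k$, and let $A\in\mathbb{Z}_{\geq0}^{N\times d}$ be an $(N,d)$-complete consecutive integers matrix. Then $A$ is completely mixable and $$\gamma(A)=\beta(A)=d+\sum_{i=0}^{d-1}\sum_{j=1}^{k} i\cdot d^{j-1}=:a_d(k).$$
   Context: For $A\in\mathbb{R}^{m\times d}$ and $\Pi=(\pi_1,\dots,\pi_d)\in\mathfrak{S}(m)^d$ (where $\mathfrak{S}(m)$ is the symmetric group on $\{1,\dots,m\}$), $A^\Pi$ denotes the matrix with $A^\Pi_{i,j}=A_{\pi_j^{-1}(i),j}$. Define $\gamma(A)=\min_{\Pi}\max_{i}\sum_{j=1}^d A^\Pi_{i,j}$ and $\beta(A)=\max_{\Pi}\min_{i}\sum_{j=1}^d A^\Pi_{i,j}$; $A$ is completely mixable if $\gamma(A)=\beta(A)$. For $d,N\in\mathbb{Z}_{\geq0}$ let $a=(1,\dots,N)^\top$; any matrix $A^\Pi$ obtained from $(a,\dots,a)\in\mathbb{Z}^{N\times d}$ by permutations $\Pi\in\mathfrak{S}(N)^d$ of the columns' entries is called an $(N,d)$-complete consecutive integers matrix. *)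

theory Defs
  imports "HOL-Combinatorics.Permutations"
begin

text \<open>An m x d matrix is a function nat => nat => int, read only at indices
  i < m (rows, 0-based) and j < d (columns, 0-based).\<close>

definition perm_tuple :: "nat \<Rightarrow> nat \<Rightarrow> (nat \<Rightarrow> nat \<Rightarrow> nat) \<Rightarrow> bool" where
  "perm_tuple m d P \<longleftrightarrow> (\<forall>j<d. P j permutes {..<m})"

definition permute_cols :: "(nat \<Rightarrow> nat \<Rightarrow> int) \<Rightarrow> (nat \<Rightarrow> nat \<Rightarrow> nat) \<Rightarrow> nat \<Rightarrow> nat \<Rightarrow> int" where
  "permute_cols A P i j = A (inv (P j) i) j"

definition row_sum :: "nat \<Rightarrow> (nat \<Rightarrow> nat \<Rightarrow> int) \<Rightarrow> nat \<Rightarrow> int" where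
  "row_sum d A i = (\<Sum>j<d. A i j)"

definition gamma :: "nat \<Rightarrow> nat \<Rightarrow> (nat \<Rightarrow> nat \<Rightarrow> int) \<Rightarrow> int" where
  "gamma m d A = Min {Max {row_sum d (permute_cols A P) i | i. i < m} | P. perm_tuple m d P}"

definition beta :: "nat \<Rightarrow> nat \<Rightarrow> (nat \<Rightarrow> nat \<Rightarrow> int) \<Rightarrow> int" where
  "beta m d A = Max {Min {row_sum d (permute_cols A P) i | i. i < m} | P. perm_tuple m d P}"

definition completely_mixable :: "nat \<Rightarrow> nat \<Rightarrow> (nat \<Rightarrow> nat \<Rightarrow> int) \<Rightarrow> bool" where
  "completely_mixable m d A \<longleftrightarrow> gamma m d A = beta m d A"

text \<open>(N,d)-complete consecutive integers matrix: obtained from (a,...,a) with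
  a = (1,...,N)^T (row i, 0-based, has entry i+1) by column permutations.\<close>
definition cci_matrix :: "nat \<Rightarrow> nat \<Rightarrow> (nat \<Rightarrow> nat \<Rightarrow> int) \<Rightarrow> bool" where
  "cci_matrix N d A \<longleftrightarrow> (\<exists>P. perm_tuple N d P \<and>
     (\<forall>i<N. \<forall>j<d. A i j = permute_cols (\<lambda>i j. int i + 1) P i j))"

end

theory Submission imports Defs begin

text \<open>Every rearrangement of a matrix has the same total sum, so its largest row sum is at least
  and its smallest row sum at most the average row sum. Hence if one rearrangement has all row
  sums equal, that common value is both \<open>\<gamma>\<close> and \<open>\<beta>\<close>. For the consecutive integers matrix
  with \<open>N = d^k\<close> such a rearrangement is obtained by writing the row index \<open>r\<close> in base \<open>d\<close> and
  letting column \<open>j\<close> add \<open>j\<close> modulo \<open>d\<close> to each of the \<open>k\<close> digits of \<open>r\<close>: summed over the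
  columns, every digit position runs through \<open>0, \<dots>, d - 1\<close> exactly once, independently of \<open>r\<close>.\<close>

lemma sum_row_sum_permute_cols:
  assumes "perm_tuple m d P"
  shows "(\<Sum>i<m. row_sum d (permute_cols A P) i) = (\<Sum>j<d. \<Sum>i<m. A i j)"
proof -
  have "(\<Sum>i<m. row_sum d (permute_cols A P) i) = (\<Sum>j<d. \<Sum>i<m. A (inv (P j) i) j)"
    unfolding row_sum_def permute_cols_def by (rule sum.swap)
  also have "\<dots> = (\<Sum>j<d. \<Sum>i<m. A i j)"
  proof (rule sum.cong[OF refl])
    fix j assume "j \<in> {..<d}"
    then have "inv (P j) permutes {..<m}"
      using assms permutes_inv unfolding perm_tuple_def by auto
    then show "(\<Sum>i<m. A (inv (P j) i) j) = (\<Sum>i<m. A i j)"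
      by (rule sum.permutes_inv)
  qed
  finally show ?thesis .
qed

lemma finite_row_sums_permute_cols:
  "finite {row_sum d (permute_cols A P) i | P i. perm_tuple m d P \<and> i < m}"
proof (rule finite_subset)
  show "{row_sum d (permute_cols A P) i | P i. perm_tuple m d P \<and> i < m}
      \<subseteq> (\<lambda>f. \<Sum>j<d. A (f j) j) ` ({..<d} \<rightarrow>\<^sub>E {..<m})"
  proof clarify
    fix P i assume P: "perm_tuple m d P" and i: "i < m"
    define f where "f = (\<lambda>j\<in>{..<d}. inv (P j) i)"
    have "inv (P j) i < m" if "j < d" for j
    proof -
      have "P j permutes {..<m}"
        using P that unfolding perm_tuple_def by simp
      from permutes_in_image[OF permutes_inv[OF this]] i show ?thesis
        by simp
    qed
    then have "f \<in> {..<d} \<rightarrow>\<^sub>E {..<m}"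
      unfolding f_def by (simp add: restrict_PiE_iff)
    moreover have "row_sum d (permute_cols A P) i = (\<Sum>j<d. A (f j) j)"
      unfolding row_sum_def permute_cols_def f_def by (rule sum.cong) auto
    ultimately show "row_sum d (permute_cols A P) i \<in> (\<lambda>f. \<Sum>j<d. A (f j) j) ` ({..<d} \<rightarrow>\<^sub>E {..<m})"
      by blast
  qed
qed (intro finite_imageI finite_PiE; simp)

lemma row_sums_Min_Max_mean:
  fixes A :: "nat \<Rightarrow> nat \<Rightarrow> int"
  assumes "m > 0" and P: "perm_tuple m d P"
  defines "R \<equiv> {row_sum d (permute_cols A P) i | i. i < m}"
  shows "int m * Min R \<le> (\<Sum>j<d. \<Sum>i<m. A i j)" and "(\<Sum>j<d. \<Sum>i<m. A i j) \<le> int m * Max R"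
proof -
  have "finite R"
    unfolding R_def by simp
  have "of_nat (card {..<m}) * Min R \<le> (\<Sum>i<m. row_sum d (permute_cols A P) i)"
    by (rule sum_bounded_below, rule Min_le[OF \<open>finite R\<close>]) (auto simp: R_def)
  then show "int m * Min R \<le> (\<Sum>j<d. \<Sum>i<m. A i j)"
    unfolding sum_row_sum_permute_cols[OF P] by simp
  have "(\<Sum>i<m. row_sum d (permute_cols A P) i) \<le> of_nat (card {..<m}) * Max R"
    by (rule sum_bounded_above, rule Max_ge[OF \<open>finite R\<close>]) (auto simp: R_def)
  then show "(\<Sum>j<d. \<Sum>i<m. A i j) \<le> int m * Max R"
    unfolding sum_row_sum_permute_cols[OF P] by simp
qed

theorem gamma_beta_eq_if_constant_row_sums:
  assumes "m > 0" and P0: "perm_tuple m d P0"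
    and const: "\<And>i. i < m \<Longrightarrow> row_sum d (permute_cols A P0) i = c"
  shows "gamma m d A = c" and "beta m d A = c"
proof -
  define R where "R P = {row_sum d (permute_cols A P) i | i. i < m}" for P
  have R_fin: "finite (R P)" and R_ne: "R P \<noteq> {}" for P
    unfolding R_def using \<open>m > 0\<close> by auto
  have total: "(\<Sum>j<d. \<Sum>i<m. A i j) = int m * c"
    unfolding sum_row_sum_permute_cols[OF P0, symmetric] using const by simp
  have c_le_Max: "c \<le> Max (R P)" and Min_le_c: "Min (R P) \<le> c" if "perm_tuple m d P" for P
    using row_sums_Min_Max_mean[OF \<open>m > 0\<close> that, where A = A] \<open>m > 0\<close>
    unfolding total R_def[symmetric] by simp_all
  have R_P0: "R P0 = {c}"
    unfolding R_def using const \<open>m > 0\<close> by auto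
  have extremes_fin: "finite {F (R P) | P. perm_tuple m d P}"
    if F_in: "\<And>P. F (R P) \<in> R P" for F :: "int set \<Rightarrow> int"
  proof (rule finite_subset[OF _ finite_row_sums_permute_cols[of d A m]], clarify)
    fix P assume "perm_tuple m d P"
    moreover obtain i where "i < m" "F (R P) = row_sum d (permute_cols A P) i"
      using F_in[of P] unfolding R_def by blast
    ultimately show "\<exists>P' i. F (R P) = row_sum d (permute_cols A P') i \<and> perm_tuple m d P' \<and> i < m"
      by blast
  qed
  have "Min {Max (R P) | P. perm_tuple m d P} = c"
  proof (rule Min_eqI[OF extremes_fin])
    have "Max (R P0) = c"
      using R_P0 by simp
    then show "c \<in> {Max (R P) | P. perm_tuple m d P}"
      using P0 by force
  next
    show "Max (R P) \<in> R P" for P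
      by (rule Max_in[OF R_fin R_ne])
  next
    show "c \<le> y" if "y \<in> {Max (R P) | P. perm_tuple m d P}" for y
      using that c_le_Max by blast
  qed
  then show "gamma m d A = c"
    unfolding gamma_def R_def .
  have "Max {Min (R P) | P. perm_tuple m d P} = c"
  proof (rule Max_eqI[OF extremes_fin])
    have "Min (R P0) = c"
      using R_P0 by simp
    then show "c \<in> {Min (R P) | P. perm_tuple m d P}"
      using P0 by force
  next
    show "Min (R P) \<in> R P" for P
      by (rule Min_in[OF R_fin R_ne])
  next
    show "y \<le> c" if "y \<in> {Min (R P) | P. perm_tuple m d P}" for y
      using that Min_le_c by blast
  qed
  then show "beta m d A = c"
    unfolding beta_def R_def .
qed

lemma cci_matrix_rearrangement:
  assumes "cci_matrix N d A" and R: "perm_tuple N d R"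
  obtains P where "perm_tuple N d P"
    and "\<And>i j. i < N \<Longrightarrow> j < d \<Longrightarrow> permute_cols A P i j = int (R j i) + 1"
proof -
  obtain Q where Q: "perm_tuple N d Q"
    and A: "\<And>i j. i < N \<Longrightarrow> j < d \<Longrightarrow> A i j = int (inv (Q j) i) + 1"
    using assms(1) unfolding cci_matrix_def permute_cols_def by auto
  define P where "P j = inv (Q j \<circ> R j)" for j
  show thesis
  proof
    show "perm_tuple N d P"
      using Q R unfolding perm_tuple_def P_def by (auto intro!: permutes_inv permutes_compose)
  next
    fix i j assume i: "i < N" and j: "j < d"
    have QjRj: "Q j permutes {..<N}" "R j permutes {..<N}"
      using Q R j unfolding perm_tuple_def by auto
    have "inv (P j) = Q j \<circ> R j"
      unfolding P_def by (rule permutes_inv_inv[OF permutes_compose[OF QjRj(2,1)]])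
    then have "inv (P j) i = Q j (R j i)"
      by simp
    moreover have "R j i < N"
      using permutes_in_image[OF QjRj(2)] i by simp
    then have "Q j (R j i) < N"
      using permutes_in_image[OF QjRj(1)] by simp
    ultimately show "permute_cols A P i j = int (R j i) + 1"
      unfolding permute_cols_def using A j permutes_inverses(2)[OF QjRj(1)] by simp
  qed
qed

lemma mod_add_right_cancel_nat: "(a + j) mod (d::nat) = (b + j) mod d \<Longrightarrow> a mod d = b mod d"
  by (simp add: nat_mod_eq_iff)

fun digit_shift :: "nat \<Rightarrow> nat \<Rightarrow> nat \<Rightarrow> nat \<Rightarrow> nat" where
  "digit_shift d j 0 r = r"
| "digit_shift d j (Suc k) r = (r mod d + j) mod d + d * digit_shift d j k (r div d)"

lemma digit_shift_less:
  assumes "d > 0" and "r < d ^ k"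
  shows "digit_shift d j k r < d ^ k"
  using assms(2)
proof (induction k arbitrary: r)
  case (Suc k)
  then have "digit_shift d j k (r div d) < d ^ k"
    by (simp add: less_mult_imp_div_less mult.commute)
  then have "d * (digit_shift d j k (r div d) + 1) \<le> d * d ^ k"
    by (intro mult_le_mono2) simp
  moreover have "(r mod d + j) mod d < d"
    using \<open>d > 0\<close> by simp
  ultimately show ?case
    by simp
qed simp

lemma inj_on_digit_shift:
  assumes "d > 0"
  shows "inj_on (digit_shift d j k) {..<d ^ k}"
proof (induction k)
  case (Suc k)
  show ?case
  proof (rule inj_onI)
    fix x y assume x: "x \<in> {..<d ^ Suc k}" and y: "y \<in> {..<d ^ Suc k}"
      and eq: "digit_shift d j (Suc k) x = digit_shift d j (Suc k) y"
    have low: "(x mod d + j) mod d = (y mod d + j) mod d"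
      using arg_cong[OF eq, of "\<lambda>n. n mod d"] by simp
    have "x mod d = y mod d"
      using mod_add_right_cancel_nat[OF low] by simp
    moreover have "x div d = y div d"
    proof (rule inj_onD[OF Suc.IH])
      show "digit_shift d j k (x div d) = digit_shift d j k (y div d)"
        using eq low \<open>d > 0\<close> by simp
      show "x div d \<in> {..<d ^ k}" "y div d \<in> {..<d ^ k}"
        using x y by (auto simp: less_mult_imp_div_less mult.commute)
    qed
    ultimately show "x = y"
      by (metis div_mult_mod_eq)
  qed
qed simp

lemma digit_shift_permutes:
  assumes "d > 0"
  shows "(\<lambda>r. if r < d ^ k then digit_shift d j k r else r) permutes {..<d ^ k}"
    (is "?p permutes _")
proof (rule bij_imp_permutes)
  have inj: "inj_on ?p {..<d ^ k}"
    using inj_on_digit_shift[OF assms, of j k] by (simp add: inj_on_def)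
  moreover have "?p ` {..<d ^ k} \<subseteq> {..<d ^ k}"
    using digit_shift_less[OF assms] by auto
  then have "?p ` {..<d ^ k} = {..<d ^ k}"
    using endo_inj_surj[OF _ _ inj] by simp
  ultimately show "bij_betw ?p {..<d ^ k} {..<d ^ k}"
    by (rule bij_betw_imageI)
qed simp

lemma sum_mod_add_lessThan:
  assumes "(d::nat) > 0"
  shows "(\<Sum>j<d. (a + j) mod d) = (\<Sum>i<d. i)"
proof -
  have inj: "inj_on (\<lambda>j. (a + j) mod d) {..<d}"
  proof (rule inj_onI)
    fix x y assume "x \<in> {..<d}" "y \<in> {..<d}" "(a + x) mod d = (a + y) mod d"
    then show "x = y"
      using mod_add_right_cancel_nat[of x a d y] by (simp add: add.commute)
  qed
  have "(\<lambda>j. (a + j) mod d) ` {..<d} = {..<d}"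
    by (rule endo_inj_surj[OF _ _ inj]) (use assms in auto)
  with inj have "bij_betw (\<lambda>j. (a + j) mod d) {..<d} {..<d}"
    by (rule bij_betw_imageI)
  then show ?thesis
    by (rule sum.reindex_bij_betw)
qed

lemma sum_digit_shift:
  assumes "d > 0" and "r < d ^ k"
  shows "(\<Sum>j<d. digit_shift d j k r) = (\<Sum>i<d. i) * (\<Sum>t<k. d ^ t)"
  using assms(2)
proof (induction k arbitrary: r)
  case (Suc k)
  have "r div d < d ^ k"
    using Suc.prems by (simp add: less_mult_imp_div_less mult.commute)
  have "(\<Sum>j<d. digit_shift d j (Suc k) r)
      = (\<Sum>j<d. (r mod d + j) mod d) + d * (\<Sum>j<d. digit_shift d j k (r div d))"
    by (simp add: sum.distrib sum_distrib_left)
  also have "\<dots> = (\<Sum>i<d. i) * (1 + d * (\<Sum>t<k. d ^ t))"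
    unfolding Suc.IH[OF \<open>r div d < d ^ k\<close>] sum_mod_add_lessThan[OF assms(1)]
    by (simp add: algebra_simps)
  also have "\<dots> = (\<Sum>i<d. i) * (\<Sum>t<Suc k. d ^ t)"
    unfolding sum.lessThan_Suc_shift by (simp add: sum_distrib_left)
  finally show ?case .
qed (simp add: sum.swap)

lemma sum_atLeast1_atMost_power_pred:
  "(\<Sum>j\<in>{1..k}. (x::'a::comm_semiring_1) ^ (j - 1)) = (\<Sum>t<k. x ^ t)"
  by (induction k) (simp_all add: atLeastAtMostSuc_conv add.commute)

theorem theorem3:
  fixes d k N :: nat and A :: "nat \<Rightarrow> nat \<Rightarrow> int"
  assumes "d > 0" and "k > 0" and "N = d ^ k"
    and "cci_matrix N d A"
  shows "completely_mixable N d A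
    \<and> gamma N d A = int d + (\<Sum>i<d. \<Sum>j\<in>{1..k}. int i * int d ^ (j - 1))
    \<and> beta N d A = int d + (\<Sum>i<d. \<Sum>j\<in>{1..k}. int i * int d ^ (j - 1))"
proof -
  define c where "c = int d + (\<Sum>i<d. \<Sum>j\<in>{1..k}. int i * int d ^ (j - 1))"
  have c_eq: "c = int d + int ((\<Sum>i<d. i) * (\<Sum>t<k. d ^ t))"
    unfolding c_def sum_distrib_left[symmetric] sum_atLeast1_atMost_power_pred
    by (simp add: sum_distrib_right)
  define S where "S j r = (if r < N then digit_shift d j k r else r)" for j r
  have S: "perm_tuple N d S"
    unfolding perm_tuple_def S_def \<open>N = d ^ k\<close> using digit_shift_permutes[OF \<open>d > 0\<close>] by blast
  obtain P where P: "perm_tuple N d P"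
    and AP: "\<And>i j. i < N \<Longrightarrow> j < d \<Longrightarrow> permute_cols A P i j = int (S j i) + 1"
    using cci_matrix_rearrangement[OF \<open>cci_matrix N d A\<close> S] by blast
  have "row_sum d (permute_cols A P) i = c" if "i < N" for i
  proof -
    have "row_sum d (permute_cols A P) i = int (\<Sum>j<d. digit_shift d j k i) + int d"
      unfolding row_sum_def using AP that by (simp add: S_def sum.distrib)
    then show ?thesis
      using sum_digit_shift[OF \<open>d > 0\<close>] that \<open>N = d ^ k\<close> c_eq by simp
  qed
  moreover have "N > 0"
    using \<open>N = d ^ k\<close> \<open>d > 0\<close> by simp
  ultimately have "gamma N d A = c" "beta N d A = c"
    using gamma_beta_eq_if_constant_row_sums[OF _ P] by blast+
  then show ?thesis
    unfolding completely_mixable_def c_def by simp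
qed

end
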